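(* Let $(\mathbb L,d)$ be a finite metric space and $m,m_V,\tilde m>0$. Then \[ \sup_{x\in\mathbb L}\sum_{\substack{X\subset\mathbb L\\ F\subset T\in\mathfrak T(X)}}12^{-|X|}c_{\sf g}(m_V)^{-|F|}c_{\sf g}(m)^{-|T\setminus F|}e^{-m_Vd(F)-md(T\setminus F)}e^{-\tilde m d(x;X)}\le c_{\sf g}(\tilde m) \] and \[ \sup_{x\in\mathbb L}\sum_{\substack{X\subset\mathbb L\\ F\subset T\in\mathfrak T(X)}}32^{-|X|}c_{\sf g}(m_V)^{-|F|}c_{\sf g}(m)^{-|T\setminus F|}e^{-m_Vd(F)-md(T\setminus F)}e^{-\tilde m d(x;X)}\prod_{y\in X}d^T(y)!\le c_{\sf g}(\tilde m). \]
   Context: The sums run over nonempty subsets $X\subset\mathbb L$, trees $T\in\mathfrak T(X)$ with vertex set $X$ (for $|X|=1$ the only tree is the edgeless one), and edge subsets $F\subset T$. For a set of edges $F$, $|F|$ is its number of edges and $d(F)=\sum_{\{y,y'\}\in F}d(y,y')$. $d(x;X)=\min_{x'\in X}d(x,x')$. $d^T(y)$ is the degree of $y$ in $T$. The geometric constant is $c_{\sf g}(m)=\sup_{x\in\mathbb L}\sum_{x'\in\mathbb L}e^{-md(x,x')}$. *)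

theory Defs
  imports "HOL-Analysis.Analysis"
begin

text \<open>The finite metric space (L,d) is a finite type 'a of class metric_space, L = UNIV, d = dist.
 Edges are unordered pairs {y,y'} with y \<noteq> y'.\<close>

definition edges_on :: "'a set \<Rightarrow> 'a set set" where
  "edges_on X = {{y, y'} | y y'. y \<in> X \<and> y' \<in> X \<and> y \<noteq> y'}"

definition adj :: "'a set set \<Rightarrow> ('a \<times> 'a) set" where
  "adj T = {(y, y'). {y, y'} \<in> T}"

definition is_tree :: "'a set \<Rightarrow> 'a set set \<Rightarrow> bool" where
  "is_tree X T \<longleftrightarrow> T \<subseteq> edges_on X \<and> card T + 1 = card X \<and>
     (\<forall>y\<in>X. \<forall>y'\<in>X. (y, y') \<in> (adj T)\<^sup>*)"

definition trees :: "'a set \<Rightarrow> 'a set set set" where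
  "trees X = {T. is_tree X T}"

definition edge_len :: "'a::metric_space set \<Rightarrow> real" where
  "edge_len e = (THE r. \<exists>y y'. e = {y, y'} \<and> r = dist y y')"

definition dF :: "'a::metric_space set set \<Rightarrow> real" where
  "dF F = (\<Sum>e\<in>F. edge_len e)"

definition dset :: "'a::metric_space \<Rightarrow> 'a set \<Rightarrow> real" where
  "dset x X = Min ((\<lambda>x'. dist x x') ` X)"

definition tdeg :: "'a set set \<Rightarrow> 'a \<Rightarrow> nat" where
  "tdeg T y = card {e \<in> T. y \<in> e}"

definition cg :: "real \<Rightarrow> 'a::{metric_space,finite} itself \<Rightarrow> real" where
  "cg m _ = (SUP x::'a. \<Sum>x'\<in>UNIV. exp (- m * dist x x'))"

end

theory Submission
  imports Defs
begin

text \<open>Summing over \<open>F \<subseteq> T\<close> turns the edge factors into a product of edge weights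
  \<open>w e = exp (- mV * d e) / cg mV + exp (- m * d e) / cg m\<close>, and \<open>\<Sum>c. w {r, c} \<le> 2\<close> for every \<open>r\<close>.
  Bounding \<open>exp (- mt * d(x; X))\<close> by \<open>\<Sum>r\<in>X. exp (- mt * d(x, r))\<close> reduces the claim to trees
  rooted at \<open>r\<close>. If the root has degree \<open>k + 1\<close>, deleting one of its edges \<open>{r, c}\<close> splits the tree
  injectively into a tree rooted at \<open>r\<close> of root degree \<open>k\<close> and a tree rooted at \<open>c\<close>, and the weights
  factorise up to the degree factors of \<open>r\<close> and \<open>c\<close>. Since every tree is met once per neighbour of
  its root, induction on the number of vertices shows that the trees of root degree \<open>k\<close> weigh at
  most \<open>2^-k / 12\<close> (resp. \<open>2^-k / 32\<close> with the factorials), and these bounds sum to at most 1.\<close>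

section \<open>Trees\<close>

lemma adj_iff [simp]: "(a, b) \<in> adj T \<longleftrightarrow> {a, b} \<in> T"
  by (simp add: adj_def)

lemma converse_adj [simp]: "(adj T)\<inverse> = adj T"
  unfolding adj_def by (auto simp: insert_commute)

lemma rtrancl_adj_sym: "(a, b) \<in> (adj T)\<^sup>* \<Longrightarrow> (b, a) \<in> (adj T)\<^sup>*"
  by (metis converse_adj rtrancl_converseI)

lemma doubleton_in_edges_on_iff [simp]: "{a, b} \<in> edges_on X \<longleftrightarrow> a \<in> X \<and> b \<in> X \<and> a \<noteq> b"
  by (auto simp: edges_on_def doubleton_eq_iff)

lemma edges_onE:
  assumes "e \<in> edges_on X"
  obtains a b where "e = {a, b}" "a \<in> X" "b \<in> X" "a \<noteq> b"
  using assms by (auto simp: edges_on_def)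

lemma finite_edges_on: "finite X \<Longrightarrow> finite (edges_on X)"
  by (rule finite_subset[of _ "Pow X"]) (auto simp: edges_on_def)

lemma is_treeD:
  assumes "is_tree X T"
  shows "T \<subseteq> edges_on X" "card T + 1 = card X" "\<And>y y'. y \<in> X \<Longrightarrow> y' \<in> X \<Longrightarrow> (y, y') \<in> (adj T)\<^sup>*"
  using assms by (auto simp: is_tree_def)

lemma exists_neighbour_closer_to_root:
  assumes "(y, r) \<in> (adj T)\<^sup>*" "y \<noteq> r"
  defines "\<delta> \<equiv> \<lambda>y. LEAST n. (y, r) \<in> adj T ^^ n"
  shows "\<exists>z. {y, z} \<in> T \<and> \<delta> z < \<delta> y"
proof -
  have "\<exists>n. (y, r) \<in> adj T ^^ n" using assms(1) by (simp add: rtrancl_power)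
  then have path: "(y, r) \<in> adj T ^^ \<delta> y" unfolding \<delta>_def by (rule LeastI_ex)
  then obtain n where n: "\<delta> y = Suc n" using assms(2) by (cases "\<delta> y") simp_all
  obtain z where "(y, z) \<in> adj T" "(z, r) \<in> adj T ^^ n"
    using relpow_Suc_D2[OF path[unfolded n]] by blast
  moreover have "\<delta> z \<le> n" unfolding \<delta>_def using calculation(2) by (rule Least_le)
  ultimately have "{y, z} \<in> T" "\<delta> z < \<delta> y" using n by simp_all
  then show ?thesis by blast
qed

text \<open>A spanning connected graph on \<open>n\<close> vertices has at least \<open>n - 1\<close> edges: sending every vertex
  other than the root to the first edge of a shortest path to the root is injective.\<close>
lemma card_le_Suc_card_edges_if_connected:
  assumes "finite X" "r \<in> X" "T \<subseteq> edges_on X" and conn: "\<And>y. y \<in> X \<Longrightarrow> (y, r) \<in> (adj T)\<^sup>*"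
  shows "card X \<le> card T + 1"
proof -
  define \<delta> where "\<delta> y = (LEAST n. (y, r) \<in> adj T ^^ n)" for y
  have "\<forall>y\<in>X - {r}. \<exists>z. {y, z} \<in> T \<and> \<delta> z < \<delta> y"
  proof
    fix y assume y: "y \<in> X - {r}"
    show "\<exists>z. {y, z} \<in> T \<and> \<delta> z < \<delta> y"
      unfolding \<delta>_def by (rule exists_neighbour_closer_to_root[OF conn]) (use y in simp_all)
  qed
  from bchoice[OF this] obtain p where p: "\<forall>y\<in>X - {r}. {y, p y} \<in> T \<and> \<delta> (p y) < \<delta> y"
    by blast
  have "inj_on (\<lambda>y. {y, p y}) (X - {r})"
  proof (rule inj_onI)
    fix y y' assume y: "y \<in> X - {r}" and y': "y' \<in> X - {r}" and eq: "{y, p y} = {y', p y'}"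
    show "y = y'"
    proof (rule ccontr)
      assume "y \<noteq> y'"
      then have "y = p y'" "y' = p y" using eq by (metis doubleton_eq_iff)+
      then show False using p[rule_format, OF y] p[rule_format, OF y'] by (metis less_asym)
    qed
  qed
  moreover have "(\<lambda>y. {y, p y}) ` (X - {r}) \<subseteq> T" using p by blast
  moreover have "finite T" using assms(1,3) finite_edges_on finite_subset by blast
  ultimately have "card (X - {r}) \<le> card T" by (rule card_inj_on_le)
  then show ?thesis using assms(1,2) by simp
qed

definition induced_edges :: "'a set set \<Rightarrow> 'a set \<Rightarrow> 'a set set" where
  "induced_edges T S = {e \<in> T. e \<subseteq> S}"

lemma induced_edges_subset: "T \<subseteq> edges_on X \<Longrightarrow> induced_edges T S \<subseteq> edges_on S"
  by (auto simp: induced_edges_def elim!: edges_onE)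

lemma induced_edges_disjoint:
  assumes "T \<subseteq> edges_on X" "X1 \<inter> X2 = {}"
  shows "induced_edges T X1 \<inter> induced_edges T X2 = {}"
  using assms by (auto simp: induced_edges_def elim!: edges_onE)

lemma rtrancl_adj_induced_edges:
  assumes "(a, y) \<in> (adj T)\<^sup>*" "a \<in> S" and closed: "\<And>z y. z \<in> S \<Longrightarrow> {z, y} \<in> T \<Longrightarrow> y \<in> S"
  shows "y \<in> S \<and> (a, y) \<in> (adj (induced_edges T S))\<^sup>*"
  using assms(1)
proof (induction rule: rtrancl_induct)
  case (step z y)
  then have "y \<in> S" using closed[of z y] by simp
  with step show ?case by (auto simp: induced_edges_def intro: rtrancl_into_rtrancl)
qed (use assms(2) in simp)

lemma rtrancl_adj_Diff_edge:
  assumes "(r, y) \<in> (adj T)\<^sup>*"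
  shows "(r, y) \<in> (adj (T - {{r, c}}))\<^sup>* \<or> (c, y) \<in> (adj (T - {{r, c}}))\<^sup>*"
  using assms
proof (induction rule: rtrancl_induct)
  case (step z y)
  show ?case
  proof (cases "{z, y} = {r, c}")
    case True
    then show ?thesis by (auto simp: doubleton_eq_iff)
  next
    case False
    then have "(z, y) \<in> adj (T - {{r, c}})" using step(2) by simp
    then show ?thesis using step(3) by (meson rtrancl_into_rtrancl)
  qed
qed simp

lemma is_treeI_root:
  assumes "T \<subseteq> edges_on X" "card T + 1 = card X" "r \<in> X"
    and "\<And>y. y \<in> X \<Longrightarrow> (r, y) \<in> (adj T)\<^sup>*"
  shows "is_tree X T"
  unfolding is_tree_def using assms by (meson rtrancl_adj_sym rtrancl_trans)

section \<open>Cutting a tree at an edge\<close>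

definition far_side :: "'a \<Rightarrow> 'a \<Rightarrow> 'a set \<Rightarrow> 'a set set \<Rightarrow> 'a set" where
  "far_side r c X T = {y \<in> X. (c, y) \<in> (adj (T - {{r, c}}))\<^sup>*}"

locale tree_edge =
  fixes X :: "'a set" and T :: "'a set set" and r c :: 'a
  assumes tree: "is_tree X T" and fin: "finite X" and rc: "{r, c} \<in> T"
begin

abbreviation "T' \<equiv> T - {{r, c}}"
abbreviation "X2 \<equiv> far_side r c X T"
abbreviation "X1 \<equiv> X - far_side r c X T"

lemma split_edge_rc: "r \<in> X" "c \<in> X" "r \<noteq> c"
proof -
  have "{r, c} \<in> edges_on X" using rc is_treeD(1)[OF tree] by blast
  then show "r \<in> X" "c \<in> X" "r \<noteq> c" by simp_all
qed

lemma split_edge_card: "card T' + 2 = card X"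
proof -
  have "finite T" using is_treeD(1)[OF tree] fin finite_edges_on finite_subset by blast
  moreover have "card T > 0" using calculation rc card_gt_0_iff by blast
  ultimately show ?thesis using is_treeD(2)[OF tree] rc by (simp add: card_Diff_singleton)
qed

lemma far_side_closed:
  assumes "z \<in> X2" "{z, y} \<in> T'"
  shows "y \<in> X2"
proof -
  have "(c, z) \<in> (adj T')\<^sup>*" "(z, y) \<in> adj T'"
    using assms by (simp_all add: far_side_def)
  then have "(c, y) \<in> (adj T')\<^sup>*" by (rule rtrancl_into_rtrancl)
  moreover have "{z, y} \<in> edges_on X" using assms(2) is_treeD(1)[OF tree] by blast
  then have "y \<in> X" by simp
  ultimately show ?thesis by (simp add: far_side_def)
qed

lemma near_side_closed:
  assumes "z \<in> X1" "{z, y} \<in> T'"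
  shows "y \<in> X1"
proof -
  have "{z, y} \<in> edges_on X" using assms(2) is_treeD(1)[OF tree] by blast
  then have "y \<in> X" by simp
  moreover have "y \<notin> X2"
  proof
    assume "y \<in> X2"
    moreover have "{y, z} \<in> T'" using assms(2) by (metis insert_commute)
    ultimately have "z \<in> X2" by (rule far_side_closed)
    then show False using assms(1) by blast
  qed
  ultimately show ?thesis by blast
qed

text \<open>Otherwise all of \<open>X\<close> stays connected after deleting \<open>{r, c}\<close>, with too few edges left.\<close>
lemma root_not_far_side: "r \<notin> X2"
proof
  assume "r \<in> X2"
  then have cr: "(c, r) \<in> (adj T')\<^sup>*" by (simp add: far_side_def)
  have "(y, c) \<in> (adj T')\<^sup>*" if "y \<in> X" for y
  proof -
    have "(r, y) \<in> (adj T')\<^sup>* \<or> (c, y) \<in> (adj T')\<^sup>*"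
      using rtrancl_adj_Diff_edge[OF is_treeD(3)[OF tree split_edge_rc(1) that]] .
    then have "(c, y) \<in> (adj T')\<^sup>*" using cr by (meson rtrancl_trans)
    then show ?thesis by (rule rtrancl_adj_sym)
  qed
  moreover have "T' \<subseteq> edges_on X" using is_treeD(1)[OF tree] by blast
  ultimately have "card X \<le> card T' + 1"
    using card_le_Suc_card_edges_if_connected[OF fin split_edge_rc(2)] by blast
  then show False using split_edge_card by simp
qed

lemma split_edge_reach_near:
  assumes "y \<in> X1"
  shows "(r, y) \<in> (adj (induced_edges T' X1))\<^sup>*"
proof -
  have "(c, y) \<notin> (adj T')\<^sup>*" using assms by (simp add: far_side_def)
  then have ry: "(r, y) \<in> (adj T')\<^sup>*"
    using rtrancl_adj_Diff_edge[OF is_treeD(3)[OF tree split_edge_rc(1)], of y c] assms by blast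
  have "r \<in> X1" using split_edge_rc(1) root_not_far_side by blast
  from rtrancl_adj_induced_edges[OF ry this near_side_closed] show ?thesis ..
qed

lemma split_edge_reach_far:
  assumes "y \<in> X2"
  shows "(c, y) \<in> (adj (induced_edges T' X2))\<^sup>*"
proof -
  have cy: "(c, y) \<in> (adj T')\<^sup>*" using assms by (simp add: far_side_def)
  have "c \<in> X2" using split_edge_rc(2) by (simp add: far_side_def)
  from rtrancl_adj_induced_edges[OF cy this far_side_closed] show ?thesis ..
qed

lemma split_edge_edges: "T' = induced_edges T' X1 \<union> induced_edges T' X2"
proof
  show "T' \<subseteq> induced_edges T' X1 \<union> induced_edges T' X2"
  proof
    fix e assume e: "e \<in> T'"
    then obtain a b where ab: "e = {a, b}" "a \<in> X" "b \<in> X"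
      using is_treeD(1)[OF tree] by (blast elim: edges_onE)
    have ba: "{b, a} \<in> T'" using e ab(1) by (metis insert_commute)
    show "e \<in> induced_edges T' X1 \<union> induced_edges T' X2"
    proof (cases "a \<in> X2")
      case True
      then have "b \<in> X2" using far_side_closed[of a b] e ab(1) by simp
      then show ?thesis using True e ab(1) by (simp add: induced_edges_def)
    next
      case False
      then have "b \<in> X1" using near_side_closed[of a b] e ab by simp
      then show ?thesis using False e ab by (simp add: induced_edges_def)
    qed
  qed
qed (auto simp: induced_edges_def)

lemma split_edge_sides:
  "r \<in> X1" "c \<in> X2" "X2 \<subseteq> X" "T = insert {r, c} (induced_edges T' X1 \<union> induced_edges T' X2)"
  using split_edge_rc root_not_far_side split_edge_edges rc by (auto simp: far_side_def)

lemma split_edge_trees: "is_tree X1 (induced_edges T' X1)" "is_tree X2 (induced_edges T' X2)"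
proof -
  have E: "T' \<subseteq> edges_on X" using is_treeD(1)[OF tree] by blast
  have E1: "induced_edges T' X1 \<subseteq> edges_on X1" and E2: "induced_edges T' X2 \<subseteq> edges_on X2"
    using induced_edges_subset[OF E] by blast+
  note r = split_edge_sides(1) and c = split_edge_sides(2) and X2 = split_edge_sides(3)
  have "card X1 \<le> card (induced_edges T' X1) + 1"
    by (rule card_le_Suc_card_edges_if_connected[OF _ r E1])
      (use fin in \<open>auto intro: rtrancl_adj_sym split_edge_reach_near\<close>)
  moreover have "card X2 \<le> card (induced_edges T' X2) + 1"
    by (rule card_le_Suc_card_edges_if_connected[OF _ c E2])
      (use finite_subset[OF X2 fin] in \<open>auto intro: rtrancl_adj_sym split_edge_reach_far\<close>)
  moreover have "card X = card X1 + card X2"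
    using fin X2 by (simp add: card_Diff_subset card_mono finite_subset)
  moreover have "card T' = card (induced_edges T' X1) + card (induced_edges T' X2)"
  proof -
    have "finite T'" using E fin finite_edges_on finite_subset by blast
    moreover have "induced_edges T' X1 \<inter> induced_edges T' X2 = {}"
      by (rule induced_edges_disjoint[OF E]) blast
    ultimately show ?thesis
      using split_edge_edges by (metis card_Un_disjoint finite_Un)
  qed
  ultimately have "card (induced_edges T' X1) + 1 = card X1"
    "card (induced_edges T' X2) + 1 = card X2"
    using split_edge_card by linarith+
  then show "is_tree X1 (induced_edges T' X1)" "is_tree X2 (induced_edges T' X2)"
    using is_treeI_root[OF E1 _ r split_edge_reach_near] is_treeI_root[OF E2 _ c split_edge_reach_far]
    by blast+
qed

end

lemma tdeg_insert_edge_Un: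
  assumes "T1 \<subseteq> edges_on X1" "T2 \<subseteq> edges_on X2" "finite T1" "X1 \<inter> X2 = {}"
    and "r \<in> X1" "c \<in> X2" "y \<in> X1"
  shows "tdeg (insert {r, c} (T1 \<union> T2)) y = tdeg T1 y + (if y = r then 1 else 0)"
proof -
  have "{r, c} \<notin> T1"
  proof
    assume "{r, c} \<in> T1"
    then have "c \<in> X1" using assms(1) by (auto dest!: subsetD)
    then show False using assms(4,6) by blast
  qed
  moreover have "y \<notin> e" if "e \<in> T2" for e
    using that assms(2,4,7) by (auto elim!: edges_onE)
  moreover have "y \<noteq> c" using assms(4,6,7) by blast
  ultimately have "{e \<in> insert {r, c} (T1 \<union> T2). y \<in> e}
      = (if y = r then insert {r, c} {e \<in> T1. y \<in> e} else {e \<in> T1. y \<in> e})"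
    by auto
  then show ?thesis using \<open>{r, c} \<notin> T1\<close> assms(3) by (simp add: tdeg_def)
qed

lemma edges_on_disjoint: "X1 \<inter> X2 = {} \<Longrightarrow> edges_on X1 \<inter> edges_on X2 = {}"
  by (auto elim!: edges_onE simp: doubleton_eq_iff)

lemma tdeg_eq_card_neighbours:
  assumes "T \<subseteq> edges_on X"
  shows "tdeg T r = card {c. {r, c} \<in> T}"
proof -
  have "bij_betw (\<lambda>c. {r, c}) {c. {r, c} \<in> T} {e \<in> T. r \<in> e}"
  proof (rule bij_betwI')
    fix c c' assume "c \<in> {c. {r, c} \<in> T}"
    then have "{r, c} \<in> edges_on X" using assms by blast
    then have "r \<noteq> c" by simp
    then show "({r, c} = {r, c'}) = (c = c')" by (auto simp: doubleton_eq_iff)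
  next
    fix e assume e: "e \<in> {e \<in> T. r \<in> e}"
    then obtain a b where ab: "e = {a, b}" using assms by (blast elim: edges_onE)
    then have "e = {r, b} \<or> e = {r, a}" using e by (auto simp: doubleton_eq_iff)
    then show "\<exists>c\<in>{c. {r, c} \<in> T}. e = {r, c}" using e by blast
  qed simp
  then show ?thesis unfolding tdeg_def by (simp add: bij_betw_same_card)
qed

lemma sum_tdeg_eq_sum_neighbours:
  fixes f :: "'a::finite set \<Rightarrow> 'a set set \<Rightarrow> real"
  assumes "\<And>X T. (X, T) \<in> A \<Longrightarrow> T \<subseteq> edges_on X"
  shows "(\<Sum>(X, T)\<in>A. real (tdeg T r) * f X T) = (\<Sum>c\<in>UNIV. \<Sum>(X, T)\<in>{(X, T)\<in>A. {r, c} \<in> T}. f X T)"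
proof -
  have "real (tdeg T r) * f X T = (\<Sum>c\<in>UNIV. if {r, c} \<in> T then f X T else 0)" if "(X, T) \<in> A" for X T
    using tdeg_eq_card_neighbours[OF assms[OF that]] by (simp add: sum.If_cases)
  then have "(\<Sum>(X, T)\<in>A. real (tdeg T r) * f X T)
      = (\<Sum>p\<in>A. \<Sum>c\<in>UNIV. if {r, c} \<in> snd p then f (fst p) (snd p) else 0)"
    by (intro sum.cong) (simp_all add: split_beta)
  also have "\<dots> = (\<Sum>c\<in>UNIV. \<Sum>p\<in>A. if {r, c} \<in> snd p then f (fst p) (snd p) else 0)"
    by (rule sum.swap)
  also have "\<dots> = (\<Sum>c\<in>UNIV. \<Sum>p\<in>{p\<in>A. {r, c} \<in> snd p}. f (fst p) (snd p))"
    by (simp add: sum.inter_filter)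
  also have "\<dots> = (\<Sum>c\<in>UNIV. \<Sum>(X, T)\<in>{(X, T)\<in>A. {r, c} \<in> T}. f X T)"
    by (intro sum.cong) (auto simp: split_beta)
  finally show ?thesis .
qed

definition split_at_edge ::
    "'a \<Rightarrow> 'a \<Rightarrow> 'a set \<times> 'a set set \<Rightarrow> ('a set \<times> 'a set set) \<times> ('a set \<times> 'a set set)" where
  "split_at_edge r c = (\<lambda>(X, T).
     let X2 = far_side r c X T; X1 = X - X2; T' = T - {{r, c}}
     in ((X1, induced_edges T' X1), (X2, induced_edges T' X2)))"

lemma split_at_edgeE:
  assumes "is_tree X T" "finite X" "{r, c} \<in> T"
  obtains X1 T1 X2 T2 where "split_at_edge r c (X, T) = ((X1, T1), (X2, T2))"
    "is_tree X1 T1" "is_tree X2 T2" "r \<in> X1" "c \<in> X2" "X1 \<inter> X2 = {}"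
    "X = X1 \<union> X2" "T = insert {r, c} (T1 \<union> T2)"
proof -
  interpret tree_edge X T r c using assms by unfold_locales
  show thesis
    by (rule that[OF _ split_edge_trees split_edge_sides(1,2) _ _ split_edge_sides(4)])
      (use split_edge_sides(3) in \<open>auto simp: split_at_edge_def Let_def\<close>)
qed

lemma tdeg_le_card_UNIV:
  assumes "is_tree X (T :: 'a::finite set set)"
  shows "tdeg T y \<le> CARD('a)"
proof -
  have "tdeg T y \<le> card T" unfolding tdeg_def by (rule card_mono) auto
  also have "card T \<le> card X" using is_treeD(2)[OF assms] by simp
  also have "card X \<le> CARD('a)" by (rule card_mono) auto
  finally show ?thesis .
qed

lemma tree_tdeg_0:
  assumes "is_tree X (T :: 'a::finite set set)" "r \<in> X" "tdeg T r = 0"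
  shows "X = {r}" "T = {}"
proof -
  have "y = r" if "y \<in> X" for y
  proof -
    have "(r, y) \<in> (adj T)\<^sup>*" using is_treeD(3)[OF assms(1,2) that] .
    then show ?thesis
    proof (cases rule: converse_rtranclE)
      case (step z)
      then have "{r, z} \<in> {e \<in> T. r \<in> e}" by simp
      then have "tdeg T r > 0" unfolding tdeg_def by (intro card_gt_0_iff[THEN iffD2]) auto
      then show ?thesis using assms(3) by simp
    qed simp
  qed
  then show "X = {r}" using assms(2) by blast
  then show "T = {}" using is_treeD(2)[OF assms(1)] by simp
qed

lemma prod_increment_at:
  assumes "finite A" "a \<in> A"
  shows "(\<Prod>y\<in>A. f (d y + (if y = a then 1 else 0))) * f (d a) = (\<Prod>y\<in>A. f (d y)) * f (Suc (d a))"
proof -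
  have "(\<Prod>y\<in>A - {a}. f (d y + (if y = a then 1 else 0))) = (\<Prod>y\<in>A - {a}. f (d y))"
    by (rule prod.cong) auto
  then show ?thesis using assms by (simp add: prod.remove mult_ac)
qed

definition join_at_edge ::
    "'a \<Rightarrow> 'a \<Rightarrow> ('a set \<times> 'a set set) \<times> ('a set \<times> 'a set set) \<Rightarrow> 'a set \<times> 'a set set" where
  "join_at_edge r c = (\<lambda>((X1, T1), (X2, T2)). (X1 \<union> X2, insert {r, c} (T1 \<union> T2)))"

lemma join_split_at_edge:
  assumes "is_tree X T" "finite X" "{r, c} \<in> T"
  shows "join_at_edge r c (split_at_edge r c (X, T)) = (X, T)"
  by (rule split_at_edgeE[OF assms]) (simp add: join_at_edge_def)

section \<open>Weighted sums over rooted trees\<close>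

text \<open>The hypotheses on \<open>\<beta>\<close> make \<open>\<beta> k\<close> a bound for the rooted trees of root degree \<open>k\<close>, by
  induction on the number of vertices; the root factor \<open>g\<close> absorbs the growth
  \<open>h (j + 1) \<le> h j * g j\<close> of the degree weight at the far end of a deleted edge.\<close>
locale tree_weight_bound =
  fixes z :: real and w :: "'a::finite set \<Rightarrow> real" and h g \<beta> :: "nat \<Rightarrow> real" and \<rho> :: real
  assumes z_nonneg: "z \<ge> 0" and w_nonneg: "\<And>e. w e \<ge> 0" and sum_w_le: "\<And>r. (\<Sum>c\<in>UNIV. w {r, c}) \<le> 2"
    and h_pos: "\<And>k. h k > 0" and g_ge_1: "\<And>k. g k \<ge> 1" and h_Suc_le: "\<And>k. h (Suc k) \<le> h k * g k"
    and \<beta>_nonneg: "\<And>k. \<beta> k \<ge> 0" and z_le_\<beta>: "z * h 0 * g 0 \<le> \<beta> 0"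
    and \<beta>_Suc: "\<And>k. 2 * \<rho> * h (Suc k) * g (Suc k) * \<beta> k \<le> real (Suc k) * h k * g k * \<beta> (Suc k)"
    and sum_\<beta>_le: "\<And>N. (\<Sum>k\<le>N. \<beta> k) \<le> \<rho>"
begin

definition tree_weight :: "'a set \<Rightarrow> 'a set set \<Rightarrow> real" where
  "tree_weight X T = z ^ card X * (\<Prod>e\<in>T. w e) * (\<Prod>y\<in>X. h (tdeg T y))"

definition rooted_weight :: "'a \<Rightarrow> 'a set \<Rightarrow> 'a set set \<Rightarrow> real" where
  "rooted_weight r X T = tree_weight X T * g (tdeg T r)"

definition rooted_trees :: "nat \<Rightarrow> 'a \<Rightarrow> ('a set \<times> 'a set set) set" where
  "rooted_trees n r = {(X, T). r \<in> X \<and> card X \<le> n \<and> is_tree X T}"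

definition root_degree_sum :: "nat \<Rightarrow> nat \<Rightarrow> 'a \<Rightarrow> real" where
  "root_degree_sum n k r = (\<Sum>(X, T)\<in>{(X, T)\<in>rooted_trees n r. tdeg T r = k}. rooted_weight r X T)"

definition rooted_sum :: "nat \<Rightarrow> 'a \<Rightarrow> real" where
  "rooted_sum n r = (\<Sum>(X, T)\<in>rooted_trees n r. rooted_weight r X T)"

lemma g_pos: "g k > 0"
  using g_ge_1[of k] by simp

lemma \<rho>_nonneg: "\<rho> \<ge> 0"
  using sum_\<beta>_le[of 0] \<beta>_nonneg[of 0] by simp

lemma tree_weight_nonneg: "tree_weight X T \<ge> 0"
  unfolding tree_weight_def using z_nonneg w_nonneg h_pos
  by (intro mult_nonneg_nonneg prod_nonneg zero_le_power) (auto intro: less_imp_le)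

lemma rooted_weight_nonneg: "rooted_weight r X T \<ge> 0"
  unfolding rooted_weight_def using tree_weight_nonneg g_pos by (simp add: less_imp_le)

lemma rooted_sum_nonneg: "rooted_sum n r \<ge> 0"
  unfolding rooted_sum_def by (rule sum_nonneg) (auto intro: rooted_weight_nonneg)

lemma rooted_sum_le:
  assumes "\<And>k. root_degree_sum n k r \<le> \<beta> k"
  shows "rooted_sum n r \<le> \<rho>"
proof -
  have "rooted_sum n r = (\<Sum>k\<le>CARD('a). \<Sum>p\<in>{p\<in>rooted_trees n r. tdeg (snd p) r = k}.
      rooted_weight r (fst p) (snd p))"
    unfolding rooted_sum_def split_beta
    by (rule sum.group[symmetric]) (auto simp: rooted_trees_def intro: tdeg_le_card_UNIV)
  also have "\<dots> = (\<Sum>k\<le>CARD('a). root_degree_sum n k r)"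
    unfolding root_degree_sum_def by (intro sum.cong refl) (auto simp: split_beta)
  also have "\<dots> \<le> (\<Sum>k\<le>CARD('a). \<beta> k)" by (rule sum_mono) (rule assms)
  also have "\<dots> \<le> \<rho>" by (rule sum_\<beta>_le)
  finally show ?thesis .
qed

lemma root_degree_sum_0: "root_degree_sum n 0 r \<le> \<beta> 0"
proof -
  have sub: "{(X, T)\<in>rooted_trees n r. tdeg T r = 0} \<subseteq> {({r}, {})}"
    by (auto simp: rooted_trees_def dest: tree_tdeg_0)
  have "root_degree_sum n 0 r \<le> (\<Sum>(X, T)\<in>{({r}, {})}. rooted_weight r X T)"
    unfolding root_degree_sum_def by (rule sum_mono2[OF _ sub]) (auto intro: rooted_weight_nonneg)
  also have "\<dots> \<le> \<beta> 0" using z_le_\<beta> by (simp add: rooted_weight_def tree_weight_def tdeg_def)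
  finally show ?thesis .
qed

lemma tree_weight_join:
  assumes tree1: "is_tree X1 T1" and tree2: "is_tree X2 T2" and disj: "X1 \<inter> X2 = {}"
    and r: "r \<in> X1" and c: "c \<in> X2"
  defines "T \<equiv> insert {r, c} (T1 \<union> T2)"
  shows "tree_weight (X1 \<union> X2) T * h (tdeg T1 r) * h (tdeg T2 c)
    = w {r, c} * tree_weight X1 T1 * tree_weight X2 T2 * h (Suc (tdeg T1 r)) * h (Suc (tdeg T2 c))"
proof -
  have E1: "T1 \<subseteq> edges_on X1" and E2: "T2 \<subseteq> edges_on X2" using is_treeD(1) tree1 tree2 by blast+
  have "T1 \<inter> T2 = {}" using edges_on_disjoint[OF disj] E1 E2 by blast
  moreover have "{r, c} \<notin> T1 \<union> T2" using E1 E2 r c disj by (auto dest!: subsetD)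
  ultimately have edges: "(\<Prod>e\<in>T. w e) = w {r, c} * (\<Prod>e\<in>T1. w e) * (\<Prod>e\<in>T2. w e)"
    by (simp add: T_def prod.union_disjoint)
  have T_swap: "T = insert {c, r} (T2 \<union> T1)" by (simp add: T_def insert_commute Un_commute)
  have disj': "X2 \<inter> X1 = {}" using disj by blast
  define A1 where "A1 = (\<Prod>y\<in>X1. h (tdeg T1 y + (if y = r then 1 else 0)))"
  define A2 where "A2 = (\<Prod>y\<in>X2. h (tdeg T2 y + (if y = c then 1 else 0)))"
  have "(\<Prod>y\<in>X1. h (tdeg T y)) = A1"
    unfolding A1_def by (rule prod.cong) (simp_all add: T_def tdeg_insert_edge_Un[OF E1 E2 _ disj r c])
  moreover have "(\<Prod>y\<in>X2. h (tdeg T y)) = A2"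
    unfolding A2_def by (rule prod.cong) (simp_all add: T_swap tdeg_insert_edge_Un[OF E2 E1 _ disj' c r])
  ultimately have "tree_weight (X1 \<union> X2) T
      = w {r, c} * (z ^ card X1 * (\<Prod>e\<in>T1. w e)) * (z ^ card X2 * (\<Prod>e\<in>T2. w e)) * A1 * A2"
    using disj unfolding tree_weight_def edges
    by (simp add: prod.union_disjoint card_Un_disjoint power_add mult_ac)
  then have "tree_weight (X1 \<union> X2) T * h (tdeg T1 r) * h (tdeg T2 c)
      = w {r, c} * (z ^ card X1 * (\<Prod>e\<in>T1. w e)) * (z ^ card X2 * (\<Prod>e\<in>T2. w e))
        * (A1 * h (tdeg T1 r)) * (A2 * h (tdeg T2 c))"
    by (simp add: mult_ac)
  also have "\<dots> = w {r, c} * (z ^ card X1 * (\<Prod>e\<in>T1. w e)) * (z ^ card X2 * (\<Prod>e\<in>T2. w e))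
        * ((\<Prod>y\<in>X1. h (tdeg T1 y)) * h (Suc (tdeg T1 r))) * ((\<Prod>y\<in>X2. h (tdeg T2 y)) * h (Suc (tdeg T2 c)))"
    unfolding A1_def A2_def prod_increment_at[OF finite r] prod_increment_at[OF finite c] ..
  finally show ?thesis by (simp add: tree_weight_def mult_ac)
qed

lemma rooted_weight_join_le:
  assumes "is_tree X1 T1" "is_tree X2 T2" "X1 \<inter> X2 = {}" "r \<in> X1" "c \<in> X2" "tdeg T1 r = k"
  shows "h k * g k * rooted_weight r (X1 \<union> X2) (insert {r, c} (T1 \<union> T2))
    \<le> h (Suc k) * g (Suc k) * w {r, c} * rooted_weight r X1 T1 * rooted_weight c X2 T2"
proof -
  define j where "j = tdeg T2 c"
  define W where "W = tree_weight (X1 \<union> X2) (insert {r, c} (T1 \<union> T2))"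
  define V where "V = w {r, c} * tree_weight X1 T1 * tree_weight X2 T2 * h (Suc k)"
  have V_nonneg: "V \<ge> 0" unfolding V_def using w_nonneg tree_weight_nonneg h_pos by (simp add: less_imp_le)
  have "tdeg (insert {r, c} (T1 \<union> T2)) r = Suc k"
    using tdeg_insert_edge_Un[OF is_treeD(1)[OF assms(1)] is_treeD(1)[OF assms(2)] _ assms(3-5)] assms(4,6)
    by simp
  then have rooted: "rooted_weight r (X1 \<union> X2) (insert {r, c} (T1 \<union> T2)) = W * g (Suc k)"
    by (simp add: rooted_weight_def W_def)
  have "W * h k * h j = V * h (Suc j)"
    using tree_weight_join[OF assms(1-5)] by (simp add: W_def V_def j_def assms(6))
  also have "\<dots> \<le> V * (h j * g j)" using h_Suc_le V_nonneg by (rule mult_left_mono)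
  finally have "(W * h k) * h j \<le> (V * g j) * h j" by (simp add: mult_ac)
  then have "W * h k \<le> V * g j" using h_pos[of j] by simp
  then have "(W * h k) * (g k * g (Suc k)) \<le> (V * g j) * (g k * g (Suc k))"
    using g_pos by (intro mult_right_mono) (auto intro: less_imp_le)
  then show ?thesis
    unfolding rooted by (simp add: V_def rooted_weight_def j_def assms(6) mult_ac)
qed

lemma split_at_edge_rooted_trees:
  assumes "(X, T) \<in> rooted_trees (Suc n) r" "tdeg T r = Suc k" "{r, c} \<in> T"
  shows "split_at_edge r c (X, T) \<in> {(X, T)\<in>rooted_trees n r. tdeg T r = k} \<times> rooted_trees n c
    \<and> h k * g k * rooted_weight r X T \<le> (case split_at_edge r c (X, T) of ((X1, T1), (X2, T2)) \<Rightarrow>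
        h (Suc k) * g (Suc k) * w {r, c} * rooted_weight r X1 T1 * rooted_weight c X2 T2)"
proof -
  have XT: "is_tree X T" "r \<in> X" "card X \<le> Suc n" using assms(1) by (simp_all add: rooted_trees_def)
  obtain X1 T1 X2 T2 where sp: "split_at_edge r c (X, T) = ((X1, T1), (X2, T2))"
    and parts: "is_tree X1 T1" "is_tree X2 T2" "r \<in> X1" "c \<in> X2" "X1 \<inter> X2 = {}"
    and X: "X = X1 \<union> X2" and T: "T = insert {r, c} (T1 \<union> T2)"
    by (rule split_at_edgeE[OF XT(1) finite assms(3)])
  have k: "tdeg T1 r = k"
    using assms(2) tdeg_insert_edge_Un[OF is_treeD(1)[OF parts(1)] is_treeD(1)[OF parts(2)] _ parts(5,3,4,3)]
    by (simp add: T)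
  have "card X = card X1 + card X2" using parts(5) by (simp add: X card_Un_disjoint)
  moreover have "card X1 > 0" "card X2 > 0" using parts(3,4) by (auto simp: card_gt_0_iff)
  ultimately have "card X1 \<le> n" "card X2 \<le> n" using XT(3) by linarith+
  then have "((X1, T1), (X2, T2)) \<in> {(X, T)\<in>rooted_trees n r. tdeg T r = k} \<times> rooted_trees n c"
    using parts k by (simp add: rooted_trees_def)
  moreover have "h k * g k * rooted_weight r X T
      \<le> h (Suc k) * g (Suc k) * w {r, c} * rooted_weight r X1 T1 * rooted_weight c X2 T2"
    unfolding X T by (rule rooted_weight_join_le[OF parts(1,2,5,3,4) k])
  ultimately show ?thesis unfolding sp by simp
qed

lemma sum_trees_through_edge_le:
  "h k * g k * (\<Sum>(X, T)\<in>{(X, T)\<in>rooted_trees (Suc n) r. tdeg T r = Suc k \<and> {r, c} \<in> T}. rooted_weight r X T)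
    \<le> h (Suc k) * g (Suc k) * w {r, c} * (root_degree_sum n k r * rooted_sum n c)"
proof -
  define Q where "Q = {(X, T)\<in>rooted_trees (Suc n) r. tdeg T r = Suc k \<and> {r, c} \<in> T}"
  define A where "A = {(X, T)\<in>rooted_trees n r. tdeg T r = k}"
  define F where "F q = (case q of ((X1, T1), (X2, T2)) \<Rightarrow>
    h (Suc k) * g (Suc k) * w {r, c} * rooted_weight r X1 T1 * rooted_weight c X2 T2)" for q
  have split: "split_at_edge r c p \<in> A \<times> rooted_trees n c
      \<and> h k * g k * case_prod (rooted_weight r) p \<le> F (split_at_edge r c p)" if "p \<in> Q" for p
  proof -
    obtain X T where p: "p = (X, T)" by (cases p)
    have "(X, T) \<in> rooted_trees (Suc n) r" "tdeg T r = Suc k" "{r, c} \<in> T"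
      using that by (simp_all add: p Q_def)
    from split_at_edge_rooted_trees[OF this] show ?thesis by (simp add: p A_def F_def)
  qed
  have inj: "inj_on (split_at_edge r c) Q"
    by (rule inj_on_inverseI[where g = "join_at_edge r c"])
      (auto simp: Q_def rooted_trees_def join_split_at_edge)
  have "h k * g k * (\<Sum>(X, T)\<in>Q. rooted_weight r X T) = (\<Sum>p\<in>Q. h k * g k * case_prod (rooted_weight r) p)"
    by (simp add: sum_distrib_left)
  also have "\<dots> \<le> (\<Sum>p\<in>Q. F (split_at_edge r c p))"
    by (rule sum_mono) (use split in blast)
  also have "\<dots> = (\<Sum>p\<in>split_at_edge r c ` Q. F p)"
    by (rule sum.reindex[OF inj, symmetric, unfolded comp_def])
  also have "\<dots> \<le> (\<Sum>p\<in>A \<times> rooted_trees n c. F p)"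
  proof (rule sum_mono2)
    show "split_at_edge r c ` Q \<subseteq> A \<times> rooted_trees n c" using split by blast
    show "0 \<le> F p" for p
      unfolding F_def using w_nonneg rooted_weight_nonneg h_pos g_pos
      by (auto simp: case_prod_beta less_imp_le)
  qed simp
  also have "\<dots> = h (Suc k) * g (Suc k) * w {r, c} * (root_degree_sum n k r * rooted_sum n c)"
    unfolding F_def sum.cartesian_product[symmetric] root_degree_sum_def rooted_sum_def A_def
    by (simp add: sum_product sum_distrib_left case_prod_beta mult_ac)
  finally show ?thesis unfolding Q_def .
qed

lemma root_degree_sum_Suc_le:
  assumes IH: "\<And>k r. root_degree_sum n k r \<le> \<beta> k"
  shows "root_degree_sum (Suc n) (Suc k) r \<le> \<beta> (Suc k)"
proof -
  define Q where "Q = {(X, T)\<in>rooted_trees (Suc n) r. tdeg T r = Suc k}"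
  define q where "q = h (Suc k) * g (Suc k)"
  have q_nonneg: "q \<ge> 0" unfolding q_def using h_pos g_pos by (simp add: less_imp_le)
  have "real (Suc k) * root_degree_sum (Suc n) (Suc k) r = (\<Sum>(X, T)\<in>Q. real (tdeg T r) * rooted_weight r X T)"
    unfolding root_degree_sum_def Q_def by (simp add: sum_distrib_left case_prod_beta)
  also have "\<dots> = (\<Sum>c\<in>UNIV. \<Sum>(X, T)\<in>{(X, T)\<in>Q. {r, c} \<in> T}. rooted_weight r X T)"
    by (rule sum_tdeg_eq_sum_neighbours) (auto simp: Q_def rooted_trees_def is_tree_def)
  finally have "h k * g k * (real (Suc k) * root_degree_sum (Suc n) (Suc k) r)
      = (\<Sum>c\<in>UNIV. h k * g k * (\<Sum>(X, T)\<in>{(X, T)\<in>rooted_trees (Suc n) r. tdeg T r = Suc k \<and> {r, c} \<in> T}.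
          rooted_weight r X T))"
    by (simp add: Q_def sum_distrib_left conj_assoc)
  also have "\<dots> \<le> (\<Sum>c\<in>UNIV. q * w {r, c} * (root_degree_sum n k r * rooted_sum n c))"
    unfolding q_def by (rule sum_mono) (rule sum_trees_through_edge_le)
  also have "\<dots> \<le> (\<Sum>c\<in>UNIV. q * w {r, c} * (\<beta> k * \<rho>))"
  proof (rule sum_mono)
    fix c
    have "root_degree_sum n k r * rooted_sum n c \<le> \<beta> k * \<rho>"
      using IH \<beta>_nonneg rooted_sum_nonneg rooted_sum_le[OF IH] by (intro mult_mono) auto
    then show "q * w {r, c} * (root_degree_sum n k r * rooted_sum n c) \<le> q * w {r, c} * (\<beta> k * \<rho>)"
      using q_nonneg w_nonneg by (intro mult_left_mono) auto
  qed
  also have "\<dots> = q * \<beta> k * \<rho> * (\<Sum>c\<in>UNIV. w {r, c})"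
    by (simp add: sum_distrib_left mult_ac)
  also have "\<dots> \<le> q * \<beta> k * \<rho> * 2"
    using sum_w_le q_nonneg \<beta>_nonneg \<rho>_nonneg by (intro mult_left_mono) auto
  also have "\<dots> \<le> (h k * g k * real (Suc k)) * \<beta> (Suc k)"
    using \<beta>_Suc[of k] by (simp add: q_def mult_ac)
  finally show ?thesis
    using h_pos[of k] g_pos[of k] by (simp add: mult.assoc)
qed

lemma root_degree_sum_le: "root_degree_sum n k r \<le> \<beta> k"
proof (induction n arbitrary: k r)
  case 0
  have "rooted_trees 0 r = {}" by (auto simp: rooted_trees_def)
  then show ?case by (simp add: root_degree_sum_def \<beta>_nonneg)
next
  case (Suc n)
  then show ?case by (cases k) (simp_all add: root_degree_sum_0 root_degree_sum_Suc_le)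
qed

lemma rooted_sum_le_\<rho>: "rooted_sum n r \<le> \<rho>"
  by (rule rooted_sum_le) (rule root_degree_sum_le)

lemma tree_weight_le_rooted_weight: "tree_weight X T \<le> rooted_weight r X T"
  using mult_left_mono[OF g_ge_1 tree_weight_nonneg] by (simp add: rooted_weight_def)

lemma sum_trees_weighted_le:
  assumes \<phi>_nonneg: "\<And>r. \<phi> r \<ge> 0"
  shows "(\<Sum>X\<in>{X. X \<noteq> {}}. \<Sum>T\<in>trees X. tree_weight X T * (\<Sum>r\<in>X. \<phi> r)) \<le> \<rho> * (\<Sum>r\<in>UNIV. \<phi> r)"
proof -
  define S where "S = Sigma {X :: 'a set. X \<noteq> {}} trees"
  have roots: "{p \<in> S. r \<in> fst p} = rooted_trees CARD('a) r" for r
    by (auto simp: S_def rooted_trees_def trees_def card_mono)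
  have "(\<Sum>X\<in>{X. X \<noteq> {}}. \<Sum>T\<in>trees X. tree_weight X T * (\<Sum>r\<in>X. \<phi> r))
      = (\<Sum>p\<in>S. \<Sum>r\<in>{r\<in>UNIV. r \<in> fst p}. tree_weight (fst p) (snd p) * \<phi> r)"
    unfolding S_def by (subst sum.Sigma) (auto simp: sum_distrib_left case_prod_beta)
  also have "\<dots> = (\<Sum>r\<in>UNIV. \<Sum>p\<in>{p\<in>S. r \<in> fst p}. tree_weight (fst p) (snd p) * \<phi> r)"
    by (rule sum.swap_restrict) simp_all
  also have "\<dots> \<le> (\<Sum>r\<in>UNIV. \<Sum>p\<in>rooted_trees CARD('a) r. rooted_weight r (fst p) (snd p) * \<phi> r)"
    unfolding roots using tree_weight_le_rooted_weight \<phi>_nonneg by (intro sum_mono mult_right_mono)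
  also have "\<dots> = (\<Sum>r\<in>UNIV. rooted_sum CARD('a) r * \<phi> r)"
    by (simp add: rooted_sum_def sum_distrib_right case_prod_beta)
  also have "\<dots> \<le> (\<Sum>r\<in>UNIV. \<rho> * \<phi> r)"
    using rooted_sum_le_\<rho> \<phi>_nonneg by (intro sum_mono mult_right_mono) auto
  finally show ?thesis by (simp add: sum_distrib_left)
qed

end

section \<open>Trees in a finite metric space\<close>

lemma edge_len_doubleton [simp]: "edge_len {a, b} = dist a b"
  unfolding edge_len_def
proof (rule the_equality)
  fix r assume "\<exists>y y'. {a, b} = {y, y'} \<and> r = dist y y'"
  then show "r = dist a b" by (auto simp: doubleton_eq_iff dist_commute)
qed blast

lemma sum_exp_dist_le_cg: "(\<Sum>x'\<in>UNIV. exp (- m * dist (x::'a) x')) \<le> cg m TYPE('a::{metric_space,finite})"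
  unfolding cg_def by (rule cSUP_upper) auto

lemma cg_ge_1: "cg m TYPE('a::{metric_space,finite}) \<ge> 1"
proof -
  fix x :: 'a
  have "exp (- m * dist x x) \<le> (\<Sum>x'\<in>UNIV. exp (- m * dist x x'))"
    by (rule member_le_sum) auto
  then show ?thesis using sum_exp_dist_le_cg[of m x] by simp
qed

lemma exp_dset_le_sum:
  assumes "finite X" "X \<noteq> {}"
  shows "exp (- m * dset x X) \<le> (\<Sum>r\<in>X. exp (- m * dist x r))"
proof -
  have "dset x X \<in> (\<lambda>x'. dist x x') ` X" unfolding dset_def using assms by (intro Min_in) auto
  then obtain r where "r \<in> X" "dset x X = dist x r" by blast
  then show ?thesis using member_le_sum[of r X "\<lambda>r. exp (- m * dist x r)"] assms(1) by simp
qed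

lemma prod_mult_exp_edge_len:
  assumes "finite F"
  shows "(\<Prod>e\<in>F. a * exp (- m * edge_len e)) = a ^ card F * exp (- m * dF F)"
  using assms by (simp add: prod.distrib dF_def sum_distrib_left exp_sum)

lemma sum_Pow_eq_prod_add:
  assumes "finite T"
  shows "(\<Sum>F\<in>Pow T. a ^ card F * b ^ card (T - F) * exp (- mV * dF F - m * dF (T - F)))
    = (\<Prod>e\<in>T. a * exp (- mV * edge_len e) + b * exp (- m * edge_len e))"
proof -
  have "(\<Prod>e\<in>F. a * exp (- mV * edge_len e)) * (\<Prod>e\<in>T - F. b * exp (- m * edge_len e))
      = a ^ card F * b ^ card (T - F) * exp (- mV * dF F - m * dF (T - F))" if "F \<subseteq> T" for F
    unfolding prod_mult_exp_edge_len[OF finite_subset[OF that assms]] prod_mult_exp_edge_len[OF finite_Diff[OF assms]]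
    by (simp add: mult_ac flip: exp_add)
  then show ?thesis by (simp add: prod_add[OF assms])
qed

definition edge_weight :: "real \<Rightarrow> real \<Rightarrow> 'a::{metric_space,finite} set \<Rightarrow> real" where
  "edge_weight mV m e
     = inverse (cg mV TYPE('a)) * exp (- mV * edge_len e) + inverse (cg m TYPE('a)) * exp (- m * edge_len e)"

lemma edge_weight_nonneg: "edge_weight mV m (e :: 'a::{metric_space,finite} set) \<ge> 0"
proof -
  have "cg mV TYPE('a) \<ge> 1" "cg m TYPE('a) \<ge> 1" by (rule cg_ge_1)+
  then show ?thesis unfolding edge_weight_def by (intro add_nonneg_nonneg mult_nonneg_nonneg) auto
qed

lemma sum_edge_weight_le: "(\<Sum>c\<in>UNIV. edge_weight mV m {r :: 'a::{metric_space,finite}, c}) \<le> 2"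
proof -
  have cg: "cg mV TYPE('a) \<ge> 1" "cg m TYPE('a) \<ge> 1" by (rule cg_ge_1)+
  have "(\<Sum>c\<in>UNIV. edge_weight mV m {r, c})
      = inverse (cg mV TYPE('a)) * (\<Sum>c\<in>UNIV. exp (- mV * dist r c))
        + inverse (cg m TYPE('a)) * (\<Sum>c\<in>UNIV. exp (- m * dist r c))"
    by (simp add: edge_weight_def sum.distrib sum_distrib_left)
  also have "\<dots> \<le> inverse (cg mV TYPE('a)) * cg mV TYPE('a) + inverse (cg m TYPE('a)) * cg m TYPE('a)"
    using cg sum_exp_dist_le_cg by (intro add_mono mult_left_mono) auto
  also have "\<dots> = 2" using cg by simp
  finally show ?thesis .
qed

lemma sum_half_powers_le: "(\<Sum>k\<le>N. c * (1/2::real) ^ k) \<le> 2 * c" if "c \<ge> 0"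
proof -
  have "(\<Sum>k\<le>N. (1/2::real) ^ k) \<le> 2" using geometric_sum_less[of "1/2::real" "{..N}"] by simp
  then have "c * (\<Sum>k\<le>N. (1/2::real) ^ k) \<le> c * 2" using that by (rule mult_left_mono)
  then show ?thesis by (simp add: sum_distrib_left mult.commute)
qed

lemma tree_weight_bound_unit_degrees:
  assumes "\<And>e. w e \<ge> 0" "\<And>r. (\<Sum>c\<in>UNIV. w {r, c}) \<le> 2"
  shows "tree_weight_bound (1/12) w (\<lambda>_. 1) (\<lambda>_. 1) (\<lambda>k. 1/12 * (1/2) ^ k) (1/4)"
proof
  show "(\<Sum>k\<le>N. 1/12 * (1/2::real) ^ k) \<le> 1/4" for N
    using sum_half_powers_le[of "1/12" N] by simp
qed (use assms in \<open>auto simp: field_simps\<close>)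

lemma tree_weight_bound_factorial_degrees:
  assumes "\<And>e. w e \<ge> 0" "\<And>r. (\<Sum>c\<in>UNIV. w {r, c}) \<le> 2"
  shows "tree_weight_bound (1/32) w (\<lambda>k. real (fact k)) (\<lambda>k. real k + 1) (\<lambda>k. 1/32 * (1/2) ^ k) (1/8)"
proof
  show "(\<Sum>k\<le>N. 1/32 * (1/2::real) ^ k) \<le> 1/8" for N
    using sum_half_powers_le[of "1/32" N] by simp
  show "2 * (1/8) * real (fact (Suc k)) * (real (Suc k) + 1) * (1/32 * (1/2) ^ k)
      \<le> real (Suc k) * real (fact k) * (real k + 1) * (1/32 * (1/2::real) ^ Suc k)" for k
  proof -
    have "(real k + 2) / 4 \<le> real (Suc k) / 2" by simp
    then show ?thesis by (simp add: field_simps)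
  qed
qed (use assms in \<open>auto simp: field_simps\<close>)

lemma sum_trees_edge_subsets_le_cg:
  fixes x :: "'a::{metric_space,finite}"
  assumes "tree_weight_bound z (edge_weight mV m :: 'a set \<Rightarrow> real) h g \<beta> \<rho>" "\<rho> \<le> 1"
  shows "(\<Sum>X\<in>{X::'a set. X \<noteq> {}}. \<Sum>T\<in>trees X. \<Sum>F\<in>Pow T.
      z ^ card X * inverse (cg mV TYPE('a)) ^ card F * inverse (cg m TYPE('a)) ^ card (T - F)
      * exp (- mV * dF F - m * dF (T - F)) * exp (- mt * dset x X) * (\<Prod>y\<in>X. h (tdeg T y)))
    \<le> cg mt TYPE('a)"
proof -
  interpret tree_weight_bound z "edge_weight mV m :: 'a set \<Rightarrow> real" h g \<beta> \<rho> by (fact assms(1))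
  have factor: "(\<Sum>F\<in>Pow T. z ^ card X * inverse (cg mV TYPE('a)) ^ card F * inverse (cg m TYPE('a)) ^ card (T - F)
      * exp (- mV * dF F - m * dF (T - F)) * exp (- mt * dset x X) * (\<Prod>y\<in>X. h (tdeg T y)))
    = z ^ card X * (\<Sum>F\<in>Pow T. inverse (cg mV TYPE('a)) ^ card F * inverse (cg m TYPE('a)) ^ card (T - F)
      * exp (- mV * dF F - m * dF (T - F))) * (\<Prod>y\<in>X. h (tdeg T y)) * exp (- mt * dset x X)" for X T
    by (simp add: sum_distrib_left sum_distrib_right mult_ac)
  have edges: "z ^ card X * (\<Sum>F\<in>Pow T. inverse (cg mV TYPE('a)) ^ card F * inverse (cg m TYPE('a)) ^ card (T - F)
      * exp (- mV * dF F - m * dF (T - F))) * (\<Prod>y\<in>X. h (tdeg T y)) * exp (- mt * dset x X)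
    = tree_weight X T * exp (- mt * dset x X)" for X T
    unfolding sum_Pow_eq_prod_add[OF finite] by (simp add: tree_weight_def edge_weight_def)
  have "(\<Sum>X\<in>{X::'a set. X \<noteq> {}}. \<Sum>T\<in>trees X. \<Sum>F\<in>Pow T.
      z ^ card X * inverse (cg mV TYPE('a)) ^ card F * inverse (cg m TYPE('a)) ^ card (T - F)
      * exp (- mV * dF F - m * dF (T - F)) * exp (- mt * dset x X) * (\<Prod>y\<in>X. h (tdeg T y)))
    = (\<Sum>X\<in>{X. X \<noteq> {}}. \<Sum>T\<in>trees X. tree_weight X T * exp (- mt * dset x X))"
    by (intro sum.cong refl) (rule trans[OF factor edges])
  also have "\<dots> \<le> (\<Sum>X\<in>{X. X \<noteq> {}}. \<Sum>T\<in>trees X. tree_weight X T * (\<Sum>r\<in>X. exp (- mt * dist x r)))"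
    using exp_dset_le_sum[OF finite] tree_weight_nonneg by (intro sum_mono mult_left_mono) auto
  also have "\<dots> \<le> \<rho> * (\<Sum>r\<in>UNIV. exp (- mt * dist x r))"
    by (rule sum_trees_weighted_le) simp
  also have "\<dots> \<le> cg mt TYPE('a)"
    using assms(2) sum_exp_dist_le_cg[of mt x] \<rho>_nonneg
    by (meson mult_left_le_one_le order_trans sum_nonneg exp_ge_zero)
  finally show ?thesis .
qed

theorem lemma5p6:
  fixes m mV mt :: real
  assumes "m > 0" "mV > 0" "mt > 0"
  shows "(SUP x::'a::{metric_space,finite}.
            \<Sum>X\<in>{X::'a set. X \<noteq> {}}. \<Sum>T\<in>trees X. \<Sum>F\<in>Pow T.
              (1/12) ^ card X * inverse (cg mV TYPE('a)) ^ card F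
              * inverse (cg m TYPE('a)) ^ card (T - F)
              * exp (- mV * dF F - m * dF (T - F)) * exp (- mt * dset x X))
           \<le> cg mt TYPE('a)
       \<and> (SUP x::'a.
            \<Sum>X\<in>{X::'a set. X \<noteq> {}}. \<Sum>T\<in>trees X. \<Sum>F\<in>Pow T.
              (1/32) ^ card X * inverse (cg mV TYPE('a)) ^ card F
              * inverse (cg m TYPE('a)) ^ card (T - F)
              * exp (- mV * dF F - m * dF (T - F)) * exp (- mt * dset x X)
              * (\<Prod>y\<in>X. real (fact (tdeg T y))))
           \<le> cg mt TYPE('a)"
proof (intro conjI cSUP_least)
  fix x :: 'a
  note edge_weight = edge_weight_nonneg[of mV m] sum_edge_weight_le[of mV m]
  show "(\<Sum>X\<in>{X::'a set. X \<noteq> {}}. \<Sum>T\<in>trees X. \<Sum>F\<in>Pow T.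
      (1/12) ^ card X * inverse (cg mV TYPE('a)) ^ card F * inverse (cg m TYPE('a)) ^ card (T - F)
      * exp (- mV * dF F - m * dF (T - F)) * exp (- mt * dset x X)) \<le> cg mt TYPE('a)"
    using sum_trees_edge_subsets_le_cg[OF tree_weight_bound_unit_degrees[OF edge_weight], where x = x and mt = mt]
    by simp
  show "(\<Sum>X\<in>{X::'a set. X \<noteq> {}}. \<Sum>T\<in>trees X. \<Sum>F\<in>Pow T.
      (1/32) ^ card X * inverse (cg mV TYPE('a)) ^ card F * inverse (cg m TYPE('a)) ^ card (T - F)
      * exp (- mV * dF F - m * dF (T - F)) * exp (- mt * dset x X) * (\<Prod>y\<in>X. real (fact (tdeg T y))))
    \<le> cg mt TYPE('a)"
    using sum_trees_edge_subsets_le_cg[OF tree_weight_bound_factorial_degrees[OF edge_weight], where x = x and mt = mt]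
    by simp
qed simp_all

end
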